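(* Let $P$ be a matrix as in the context, with column index set $\mathcal{F}$. Let $A\subseteq\mathcal{F}$ with $|A|=r+1$, $\det(P_A)\neq0$ and $A\cap\mathcal{F}'\neq\emptyset$. Then there exists $i_1\in\{0,\dots,r\}$ such that $|A\cap\mathcal{F}_{i_1}|=0$ and $|A\cap\mathcal{F}_i|=1$ for all $i\neq i_1$, and $|\det(P_A)|=\prod_{i\neq i_1}l_{ij_i}$, where $A\cap\mathcal{F}_i=\{f_{ij_i}\}$ for $i\ne i_1$.
   Context: Fix integers $r\ge1$, $n_0,\dots,n_r\ge1$, vectors $l_i\in\mathbb{Z}_{\ge1}^{n_i}$, $d_i\in\mathbb{Z}^{n_i}$ with $\gcd(l_{ij},d_{ij})=1$ and $d_{i1}/l_{i1}>\dots>d_{in_i}/l_{in_i}$. Let $e_1,\dots,e_{r+1}$ be the standard basis of $\mathbb{Z}^{r+1}$, $u=e_{r+1}$, $e_0=-(e_1+\dots+e_r)$, $v_{ij}=l_{ij}e_i+d_{ij}u$. Let $\mathcal{F}_i=\{f_{i1},\dots,f_{in_i}\}$, $\mathcal{F}'$ one of $\emptyset,\{f^+\},\{f^-\},\{f^+,f^-\}$ (types (ee),(pe),(ep),(pp)), $\mathcal{F}=\mathcal{F}_0\cup\dots\cup\mathcal{F}_r\cup\mathcal{F}'$, and $P$ the $(r+1)\times|\mathcal{F}|$ matrix with column $v_{ij}$ at $f_{ij}$, $u$ at $f^+$, $-u$ at $f^-$. For $|A|=r+1$, $P_A$ is the square submatrix of columns indexed by $A$. *)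

theory Defs
  imports "Jordan_Normal_Form.Determinant"
begin

text \<open>Column indices: F i j stands for f_{ij}, Fplus for f^+, Fminus for f^-.\<close>
datatype col = F nat nat | Fplus | Fminus

text \<open>Rows are indexed 0..r; row k corresponds to the coordinate of e_{k+1}
  (so row r is the coordinate of u = e_{r+1}).\<close>

definition ebasis :: "nat \<Rightarrow> nat \<Rightarrow> nat \<Rightarrow> int" where
  "ebasis r i k = (if i = 0 then (if k < r then -1 else 0) else (if k = i - 1 then 1 else 0))"

definition uvec :: "nat \<Rightarrow> nat \<Rightarrow> int" where
  "uvec r k = (if k = r then 1 else 0)"

fun Pent :: "nat \<Rightarrow> (nat \<Rightarrow> nat \<Rightarrow> int) \<Rightarrow> (nat \<Rightarrow> nat \<Rightarrow> int) \<Rightarrow> col \<Rightarrow> nat \<Rightarrow> int" where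
  "Pent r l d (F i j) k = l i j * ebasis r i k + d i j * uvec r k"
| "Pent r l d Fplus k = uvec r k"
| "Pent r l d Fminus k = - uvec r k"

definition Fi :: "(nat \<Rightarrow> nat) \<Rightarrow> nat \<Rightarrow> col set" where
  "Fi n i = {F i j | j. 1 \<le> j \<and> j \<le> n i}"

definition Fall :: "nat \<Rightarrow> (nat \<Rightarrow> nat) \<Rightarrow> col set \<Rightarrow> col set" where
  "Fall r n Fp = (\<Union>i\<in>{0..r}. Fi n i) \<union> Fp"

text \<open>P_A, where the column set A is enumerated by the distinct list cs.\<close>
definition subP :: "nat \<Rightarrow> (nat \<Rightarrow> nat \<Rightarrow> int) \<Rightarrow> (nat \<Rightarrow> nat \<Rightarrow> int) \<Rightarrow> col list \<Rightarrow> int mat" where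
  "subP r l d cs = mat (Suc r) (Suc r) (\<lambda>(k, m). Pent r l d (cs ! m) k)"

end

theory Submission
  imports Defs
begin

text \<open>
  Let c0 = f^+ or f^- be a column of A, so that c0 = +u or -u. Then A contains neither the other
  one of f^+, f^- (as u + (-u) = 0) nor two columns f_ij, f_ij' of the same F_i, because
  l_ij' v_ij - l_ij v_ij' is a multiple of u. Hence the r columns of A other than c0 lie in
  r different sets among F_0, ..., F_r, which leaves exactly one set F_i1 untouched.

  In the Leibniz expansion of det P_A, a nonvanishing term must match c0 with the u-row. A column
  v_ij with i > 0 has nonzero entries only in the rows of e_i and u, so it must be matched with
  the row of e_i; the column from F_0, if there is one, gets the remaining row. So exactly one
  term survives, and its absolute value is the product of the l_ij.
\<close>

lemma abs_prod_linordered_idom: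
  fixes f :: "'b \<Rightarrow> 'a::linordered_idom"
  shows "\<bar>prod f A\<bar> = (\<Prod>x\<in>A. \<bar>f x\<bar>)"
  by (induct A rule: infinite_finite_induct) (auto simp: abs_mult)

lemma sum_eq_card_minus_one_obtains_unique_zero:
  fixes f :: "'a \<Rightarrow> nat"
  assumes "finite I" and le_one: "\<And>i. i \<in> I \<Longrightarrow> f i \<le> 1" and "sum f I + 1 = card I"
  obtains i1 where "i1 \<in> I" "f i1 = 0" "\<And>i. i \<in> I \<Longrightarrow> i \<noteq> i1 \<Longrightarrow> f i = 1"
proof -
  define J where "J = {i\<in>I. f i = 1}"
  have "sum f I = (\<Sum>i\<in>I. of_bool (f i = 1))"
    using le_one by (intro sum.cong) (auto simp: le_Suc_eq)
  also have "\<dots> = card J"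
    using assms(1) by (simp add: J_def Int_def)
  finally have "card (I - J) = 1"
    using assms(1,3) card_Diff_subset[of J I] by (simp add: J_def)
  then obtain i1 where i1: "I - J = {i1}"
    by (rule card_1_singletonE)
  show ?thesis
  proof (rule that)
    have "i1 \<in> I" "f i1 \<noteq> 1"
      using i1 by (auto simp: J_def)
    then show "i1 \<in> I" "f i1 = 0"
      using le_one[of i1] by auto
    show "f i = 1" if "i \<in> I" "i \<noteq> i1" for i
      using i1 that by (auto simp: J_def)
  qed
qed

lemma distinct_obtains_unique_index:
  assumes "distinct xs" and unique: "\<And>x y. x \<in> set xs \<Longrightarrow> y \<in> set xs \<Longrightarrow> P x \<Longrightarrow> P y \<Longrightarrow> x = y"
  obtains b where "\<And>m. m < length xs \<Longrightarrow> P (xs ! m) \<Longrightarrow> m = b"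
proof (cases "\<exists>m<length xs. P (xs ! m)")
  case True
  then obtain b where b: "b < length xs" "P (xs ! b)"
    by blast
  have "m = b" if "m < length xs" "P (xs ! m)" for m
  proof -
    have "xs ! m = xs ! b"
      using unique[OF nth_mem nth_mem] that b by blast
    then show ?thesis
      using nth_eq_iff_index_eq[OF assms(1) that(1) b(1)] by blast
  qed
  then show ?thesis
    by (rule that)
qed blast

lemma permutes_eq_if_preimages_agree:
  assumes p: "p permutes S" and q: "q permutes S"
    and preimage: "\<And>x y. x \<in> S \<Longrightarrow> y \<in> S \<Longrightarrow> p x = q y \<Longrightarrow> p x \<noteq> b \<Longrightarrow> x = y"
  shows "p = q"
proof
  fix x
  show "p x = q x"
  proof (cases "x \<in> S")
    case True
    obtain y where y: "y \<in> S" "p x = q y"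
      using True by (metis imageE permutes_image permutes_in_image p q)
    obtain z where z: "z \<in> S" "p z = q x"
      using True by (metis imageE permutes_image permutes_in_image p q)
    show ?thesis
    proof (cases "p x = b")
      case True
      with z preimage[OF z(1) \<open>x \<in> S\<close>] show ?thesis by fastforce
    next
      case False
      with y preimage[OF \<open>x \<in> S\<close> y(1)] show ?thesis by simp
    qed
  next
    case False
    then show ?thesis using p q by (simp add: permutes_not_in)
  qed
qed

lemma det_eq_0_if_columns_dependent:
  fixes g :: "'c \<Rightarrow> nat \<Rightarrow> 'a::idom"
  assumes cs: "distinct cs" "length cs = n" and S: "S \<subseteq> set cs"
    and nonzero: "c \<in> S" "w c \<noteq> 0"
    and dependent: "\<And>k. k < n \<Longrightarrow> (\<Sum>c\<in>S. w c * g c k) = 0"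
  shows "det (mat n n (\<lambda>(k, m). g (cs ! m) k)) = 0"
proof -
  let ?M = "mat n n (\<lambda>(k, m). g (cs ! m) k)"
  define v where "v = vec n (\<lambda>m. if cs ! m \<in> S then w (cs ! m) else 0)"
  have set_cs: "set cs = (\<lambda>m. cs ! m) ` {0..<n}"
    using cs by (auto simp: in_set_conv_nth)
  have "?M *\<^sub>v v = 0\<^sub>v n"
  proof (rule eq_vecI)
    fix k assume "k < dim_vec (0\<^sub>v n)"
    then have k: "k < n" by simp
    have "(?M *\<^sub>v v) $ k = (\<Sum>m = 0..<n. (\<lambda>c. if c \<in> S then w c * g c k else 0) (cs ! m))"
      using k by (auto simp: scalar_prod_def v_def intro: sum.cong)
    also have "\<dots> = (\<Sum>c\<in>set cs. if c \<in> S then w c * g c k else 0)"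
      unfolding set_cs using cs by (subst sum.reindex) (auto intro: inj_on_nth)
    also have "\<dots> = (\<Sum>c\<in>S. w c * g c k)"
      using S by (simp add: sum.inter_restrict[symmetric] Int_absorb1)
    finally show "(?M *\<^sub>v v) $ k = 0\<^sub>v n $ k"
      using dependent k by simp
  qed simp
  moreover have "v \<noteq> 0\<^sub>v n"
  proof
    have "c \<in> set cs" using nonzero(1) S by blast
    then obtain m where m: "m < n" "cs ! m = c"
      using cs(2) by (auto simp: in_set_conv_nth)
    assume "v = 0\<^sub>v n"
    then have "v $ m = 0" using m(1) by simp
    moreover have "v $ m = w c" using m nonzero(1) by (simp add: v_def)
    ultimately show False using nonzero(2) by simp
  qed
  moreover have "v \<in> carrier_vec n" by (simp add: v_def)
  ultimately show ?thesis
    using det_0_iff_vec_prod_zero[OF mat_carrier] by blast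
qed

definition nonzero_transversal :: "'a::zero mat \<Rightarrow> (nat \<Rightarrow> nat) \<Rightarrow> bool" where
  "nonzero_transversal M p \<longleftrightarrow>
     p permutes {0..<dim_row M} \<and> (\<forall>i<dim_row M. M $$ (i, p i) \<noteq> 0)"

lemma nonzero_transversalD:
  assumes "nonzero_transversal M p" "M \<in> carrier_mat n n"
  shows "p permutes {0..<n}" and "\<And>i. i < n \<Longrightarrow> M $$ (i, p i) \<noteq> 0"
  using assms by (auto simp: nonzero_transversal_def)

lemma abs_det_eq_prod_if_unique_nonzero_transversal:
  fixes M :: "'a::linordered_idom mat"
  assumes M: "M \<in> carrier_mat n n" and "det M \<noteq> 0"
    and unique: "\<And>p q. nonzero_transversal M p \<Longrightarrow> nonzero_transversal M q \<Longrightarrow> p = q"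
    and weight: "\<And>p i. nonzero_transversal M p \<Longrightarrow> i < n \<Longrightarrow> \<bar>M $$ (i, p i)\<bar> = w (p i)"
  shows "\<bar>det M\<bar> = (\<Prod>j = 0..<n. w j)"
proof -
  let ?term = "\<lambda>p. signof p * (\<Prod>i = 0..<n. M $$ (i, p i))"
  have transversal_iff: "nonzero_transversal M p \<longleftrightarrow> p permutes {0..<n} \<and> ?term p \<noteq> 0" for p
    using M signof_pm_one[of p] by (auto simp: nonzero_transversal_def)
  have det: "det M = (\<Sum>p\<in>{p. p permutes {0..<n}}. ?term p)"
    using det_def'[OF M] .
  then obtain p where p: "nonzero_transversal M p"
    using \<open>det M \<noteq> 0\<close> transversal_iff by (metis (no_types, lifting) mem_Collect_eq sum.neutral)
  have "det M = (\<Sum>q\<in>{p}. ?term q)"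
    unfolding det using p unique transversal_iff
    by (intro sum.mono_neutral_right) (auto simp: finite_permutations)
  moreover have "\<bar>signof p :: 'a\<bar> = 1"
    using signof_pm_one[of p] by (metis abs_1 abs_minus_cancel empty_iff insert_iff)
  ultimately have "\<bar>det M\<bar> = (\<Prod>i = 0..<n. \<bar>M $$ (i, p i)\<bar>)"
    by (simp add: abs_mult abs_prod_linordered_idom)
  also have "\<dots> = (\<Prod>i = 0..<n. w (p i))"
    using weight[OF p] by simp
  also have "\<dots> = (\<Prod>j = 0..<n. w j)"
    using prod.permute[of p "{0..<n}" w] p M by (auto simp: nonzero_transversal_def)
  finally show ?thesis .
qed

lemma ebasis_nonzero:
  assumes "k < r" "ebasis r i k \<noteq> 0"
  shows "(i = 0 \<or> i = Suc k) \<and> \<bar>ebasis r i k\<bar> = 1"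
  using assms by (auto simp: ebasis_def split: if_splits)

lemma subP_carrier: "subP r l d cs \<in> carrier_mat (Suc r) (Suc r)"
  by (simp add: subP_def)

lemma subP_index: "k < Suc r \<Longrightarrow> m < Suc r \<Longrightarrow> subP r l d cs $$ (k, m) = Pent r l d (cs ! m) k"
  by (simp add: subP_def)

lemma det_subP_eq_0_if_Fplus_Fminus:
  assumes "distinct cs" "length cs = Suc r" "Fplus \<in> set cs" "Fminus \<in> set cs"
  shows "det (subP r l d cs) = 0"
  unfolding subP_def
  by (rule det_eq_0_if_columns_dependent[where S = "{Fplus, Fminus}" and c = Fplus and w = "\<lambda>_. 1"])
    (use assms in auto)

lemma det_subP_eq_0_if_same_group:
  assumes "distinct cs" "length cs = Suc r" "c0 \<in> set cs" "c0 \<in> {Fplus, Fminus}"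
    and "F i j \<in> set cs" "F i j' \<in> set cs" "j \<noteq> j'"
  shows "det (subP r l d cs) = 0"
proof (cases "l i j = 0")
  case True
  define w where "w c = (if c = F i j then 1 else - Pent r l d c0 r * d i j)" for c
  show ?thesis
    unfolding subP_def
  proof (rule det_eq_0_if_columns_dependent[where S = "{F i j, c0}" and c = "F i j" and w = w])
    fix k
    show "(\<Sum>c\<in>{F i j, c0}. w c * Pent r l d c k) = 0"
      using assms(4) True by (auto simp: w_def uvec_def)
  qed (use assms in \<open>auto simp: w_def\<close>)
next
  case False
  define w where "w c =
    (if c = F i j then l i j' else if c = F i j' then - l i j
     else - Pent r l d c0 r * (l i j' * d i j - l i j * d i j'))" for c
  show ?thesis
    unfolding subP_def
  proof (rule det_eq_0_if_columns_dependent[where S = "{F i j, F i j', c0}" and c = "F i j'" and w = w])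
    fix k
    show "(\<Sum>c\<in>{F i j, F i j', c0}. w c * Pent r l d c k) = 0"
      using assms(4,7) by (auto simp: w_def uvec_def algebra_simps)
  qed (use assms False in \<open>auto simp: w_def\<close>)
qed

lemma nonsingular_subP_columns:
  assumes cs: "distinct cs" "length cs = Suc r" and nonsingular: "det (subP r l d cs) \<noteq> 0"
    and c0: "c0 \<in> set cs" "c0 \<in> {Fplus, Fminus}"
  shows "set cs \<inter> {Fplus, Fminus} = {c0}"
    and "\<forall>i j j'. F i j \<in> set cs \<longrightarrow> F i j' \<in> set cs \<longrightarrow> j = j'"
proof -
  have "\<not> (Fplus \<in> set cs \<and> Fminus \<in> set cs)"
    using det_subP_eq_0_if_Fplus_Fminus[OF cs] nonsingular by blast
  with c0 show "set cs \<inter> {Fplus, Fminus} = {c0}"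
    by blast
  show "\<forall>i j j'. F i j \<in> set cs \<longrightarrow> F i j' \<in> set cs \<longrightarrow> j = j'"
    using det_subP_eq_0_if_same_group[OF cs c0] nonsingular by blast
qed

lemma subP_transversal_last_row:
  assumes "length cs = Suc r" "set cs \<inter> {Fplus, Fminus} = {c0}"
    and p: "nonzero_transversal (subP r l d cs) p"
  shows "cs ! p r = c0"
proof -
  have "c0 \<in> set cs" and c0: "c0 = Fplus \<or> c0 = Fminus"
    using assms(2) by blast+
  then obtain m0 where m0: "m0 < Suc r" "cs ! m0 = c0"
    using assms(1) by (auto simp: in_set_conv_nth)
  note perm = nonzero_transversalD(1)[OF p subP_carrier]
  have "m0 \<in> p ` {0..<Suc r}"
    using permutes_image[OF perm] m0(1) by simp
  then obtain k where k: "k < Suc r" "p k = m0"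
    by auto
  have "Pent r l d c0 k \<noteq> 0"
    using nonzero_transversalD(2)[OF p subP_carrier k(1)] k m0 by (simp add: subP_index)
  then have "k = r"
    using c0 by (auto simp: uvec_def split: if_splits)
  then show ?thesis
    using k m0 by simp
qed

lemma subP_transversal_upper_row:
  assumes "distinct cs" "length cs = Suc r" "set cs \<inter> {Fplus, Fminus} = {c0}"
    and p: "nonzero_transversal (subP r l d cs) p" and k: "k < r"
  shows "\<exists>i j. cs ! p k = F i j \<and> (i = 0 \<or> i = Suc k) \<and>
           \<bar>subP r l d cs $$ (k, p k)\<bar> = \<bar>l i j\<bar>"
proof -
  note perm = nonzero_transversalD(1)[OF p subP_carrier]
  have pk: "p k < Suc r" and pr: "p r < Suc r"
    using k perm by (auto simp: permutes_in_image)
  have "p k \<noteq> p r"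
    using k permutes_inj[OF perm] by (auto dest: injD)
  then have "cs ! p k \<noteq> cs ! p r"
    using assms(1,2) pk pr by (simp add: nth_eq_iff_index_eq)
  then have "cs ! p k \<noteq> c0"
    using subP_transversal_last_row[OF assms(2,3) p] by simp
  moreover have "cs ! p k \<in> set cs"
    using assms(2) pk by simp
  ultimately have "cs ! p k \<notin> {Fplus, Fminus}"
    using assms(3) by blast
  then obtain i j where ij: "cs ! p k = F i j"
    by (cases "cs ! p k") auto
  have entry: "subP r l d cs $$ (k, p k) = l i j * ebasis r i k"
    using k pk ij by (simp add: subP_index uvec_def)
  moreover have "subP r l d cs $$ (k, p k) \<noteq> 0"
    using nonzero_transversalD(2)[OF p subP_carrier] k by simp
  ultimately have "(i = 0 \<or> i = Suc k) \<and> \<bar>ebasis r i k\<bar> = 1"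
    using ebasis_nonzero[OF k] by simp
  then show ?thesis
    using ij entry by (auto simp: abs_mult)
qed

lemma subP_nonzero_transversal_unique:
  assumes cs: "distinct cs" "length cs = Suc r" and c0: "set cs \<inter> {Fplus, Fminus} = {c0}"
    and one_per_group: "\<forall>i j j'. F i j \<in> set cs \<longrightarrow> F i j' \<in> set cs \<longrightarrow> j = j'"
    and p: "nonzero_transversal (subP r l d cs) p" and q: "nonzero_transversal (subP r l d cs) q"
  shows "p = q"
proof -
  obtain b where b: "\<And>m. m < length cs \<Longrightarrow> cs ! m \<in> range (F 0) \<Longrightarrow> m = b"
    by (rule distinct_obtains_unique_index[OF cs(1), of "\<lambda>c. c \<in> range (F 0)"])
      (use one_per_group in blast)+
  \<comment> \<open>The row a nonvanishing term must assign to the column c; the value for the column b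
    of F 0 is junk.\<close>
  define row_of where "row_of c = (case c of F i j \<Rightarrow> i - 1 | _ \<Rightarrow> r)" for c
  have row_of: "x = row_of (cs ! t x)"
    if t: "nonzero_transversal (subP r l d cs) t" and x: "x < Suc r" "t x \<noteq> b" for t x
  proof (cases "x = r")
    case True
    have "c0 = Fplus \<or> c0 = Fminus"
      using c0 by blast
    then show ?thesis
      using subP_transversal_last_row[OF cs(2) c0 t] True by (auto simp: row_of_def)
  next
    case False
    with x(1) have "x < r" by simp
    then obtain i j where "cs ! t x = F i j" "i = 0 \<or> i = Suc x"
      using subP_transversal_upper_row[OF cs c0 t] by blast
    moreover have "t x < Suc r"
      using nonzero_transversalD(1)[OF t subP_carrier] x(1) by (simp add: permutes_in_image)
    ultimately show ?thesis
      using b[of "t x"] x(2) cs(2) by (auto simp: row_of_def)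
  qed
  show ?thesis
  proof (rule permutes_eq_if_preimages_agree)
    show "p permutes {0..<Suc r}" "q permutes {0..<Suc r}"
      using p q by (simp_all add: nonzero_transversalD(1)[OF _ subP_carrier])
    fix x y
    assume "x \<in> {0..<Suc r}" "y \<in> {0..<Suc r}" "p x = q y" "p x \<noteq> b"
    then show "x = y"
      using row_of[OF p, of x] row_of[OF q, of y] by simp
  qed
qed

fun col_weight :: "(nat \<Rightarrow> nat \<Rightarrow> int) \<Rightarrow> col \<Rightarrow> int" where
  "col_weight l (F i j) = \<bar>l i j\<bar>"
| "col_weight l Fplus = 1"
| "col_weight l Fminus = 1"

lemma abs_det_subP:
  assumes cs: "distinct cs" "length cs = Suc r" and "det (subP r l d cs) \<noteq> 0"
    and c0: "set cs \<inter> {Fplus, Fminus} = {c0}"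
    and one_per_group: "\<forall>i j j'. F i j \<in> set cs \<longrightarrow> F i j' \<in> set cs \<longrightarrow> j = j'"
  shows "\<bar>det (subP r l d cs)\<bar> = (\<Prod>c\<in>set cs. col_weight l c)"
proof -
  have "\<bar>det (subP r l d cs)\<bar> = (\<Prod>m = 0..<Suc r. col_weight l (cs ! m))"
  proof (rule abs_det_eq_prod_if_unique_nonzero_transversal[OF subP_carrier \<open>det _ \<noteq> 0\<close>])
    show "p = q" if "nonzero_transversal (subP r l d cs) p" "nonzero_transversal (subP r l d cs) q"
      for p q
      using subP_nonzero_transversal_unique[OF cs c0 one_per_group that] .
    fix p k
    assume p: "nonzero_transversal (subP r l d cs) p" and k: "k < Suc r"
    show "\<bar>subP r l d cs $$ (k, p k)\<bar> = col_weight l (cs ! p k)"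
    proof (cases "k = r")
      case True
      have "c0 = Fplus \<or> c0 = Fminus"
        using c0 by blast
      moreover have "p r < Suc r"
        using nonzero_transversalD(1)[OF p subP_carrier] by (simp add: permutes_in_image)
      ultimately show ?thesis
        using True subP_transversal_last_row[OF cs(2) c0 p] by (auto simp: subP_index uvec_def)
    next
      case False
      with k have "k < r" by simp
      then obtain i j where "cs ! p k = F i j" "\<bar>subP r l d cs $$ (k, p k)\<bar> = \<bar>l i j\<bar>"
        using subP_transversal_upper_row[OF cs c0 p] by blast
      then show ?thesis
        by simp
    qed
  qed
  also have "\<dots> = (\<Prod>c\<in>set cs. col_weight l c)"
    using cs by (simp add: prod.distinct_set_conv_list prod.list_conv_set_nth)
  finally show ?thesis .
qed

lemma prod_col_weight_eq:
  assumes "finite A" "c0 \<in> A" "c0 \<in> {Fplus, Fminus}" "A - {c0} = (\<lambda>i. F i (js i)) ` I"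
    and "\<And>i. i \<in> I \<Longrightarrow> l i (js i) \<ge> 0"
  shows "(\<Prod>c\<in>A. col_weight l c) = (\<Prod>i\<in>I. l i (js i))"
proof -
  have "(\<Prod>c\<in>A. col_weight l c) = col_weight l c0 * (\<Prod>c\<in>A - {c0}. col_weight l c)"
    using assms(1,2) by (rule prod.remove)
  also have "col_weight l c0 = 1"
    using assms(3) by auto
  also have "(\<Prod>c\<in>A - {c0}. col_weight l c) = (\<Prod>i\<in>I. \<bar>l i (js i)\<bar>)"
    unfolding assms(4) by (simp add: prod.reindex inj_on_def)
  also have "\<dots> = (\<Prod>i\<in>I. l i (js i))"
    using assms(5) by simp
  finally show ?thesis
    by simp
qed

lemma Diff_eq_UN_Fi:
  assumes "A \<subseteq> Fall r n Fp" "Fp \<subseteq> {Fplus, Fminus}" "A \<inter> {Fplus, Fminus} = {c0}"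
  shows "A - {c0} = (\<Union>i\<in>{0..r}. A \<inter> Fi n i)"
proof (intro equalityI subsetI)
  fix x
  assume "x \<in> A - {c0}"
  then have "x \<in> A" "x \<notin> Fp"
    using assms(2,3) by blast+
  then show "x \<in> (\<Union>i\<in>{0..r}. A \<inter> Fi n i)"
    using assms(1) by (auto simp: Fall_def)
next
  fix x
  assume x: "x \<in> (\<Union>i\<in>{0..r}. A \<inter> Fi n i)"
  have "c0 \<in> {Fplus, Fminus}"
    using assms(3) by blast
  then have "c0 \<notin> Fi n i" for i
    by (auto simp: Fi_def)
  with x show "x \<in> A - {c0}"
    by blast
qed

lemma columns_meet_all_groups_but_one:
  assumes "finite A" "card A = r + 1" "A \<subseteq> Fall r n Fp" "Fp \<subseteq> {Fplus, Fminus}"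
    and "A \<inter> {Fplus, Fminus} = {c0}"
    and one_per_group: "\<forall>i j j'. F i j \<in> A \<longrightarrow> F i j' \<in> A \<longrightarrow> j = j'"
  obtains i1 js where "i1 \<le> r" "A \<inter> Fi n i1 = {}"
    and "\<And>i. i \<le> r \<Longrightarrow> i \<noteq> i1 \<Longrightarrow> A \<inter> Fi n i = {F i (js i)}"
    and "A - {c0} = (\<lambda>i. F i (js i)) ` ({0..r} - {i1})"
proof -
  note split = Diff_eq_UN_Fi[OF assms(3-5)]
  have "c0 \<in> A"
    using assms(5) by blast
  then have "card (A - {c0}) = r"
    using assms(2) by simp
  moreover have "card (A - {c0}) = (\<Sum>i\<in>{0..r}. card (A \<inter> Fi n i))"
  proof -
    have "Fi n i \<inter> Fi n i' = {}" if "i \<noteq> i'" for i i'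
      using that by (auto simp: Fi_def)
    then show ?thesis
      unfolding split using assms(1) by (intro card_UN_disjoint) blast+
  qed
  ultimately have sum: "(\<Sum>i\<in>{0..r}. card (A \<inter> Fi n i)) + 1 = card {0..r}"
    by simp
  have le_one: "card (A \<inter> Fi n i) \<le> 1" for i
  proof -
    have "x = y" if "x \<in> A \<inter> Fi n i" "y \<in> A \<inter> Fi n i" for x y
      using that one_per_group by (auto simp: Fi_def)
    then show ?thesis
      using card_le_Suc0_iff_eq[of "A \<inter> Fi n i"] assms(1) by auto
  qed
  obtain i1 where i1: "i1 \<le> r" "card (A \<inter> Fi n i1) = 0"
    and others: "\<And>i. i \<le> r \<Longrightarrow> i \<noteq> i1 \<Longrightarrow> card (A \<inter> Fi n i) = 1"
    using sum_eq_card_minus_one_obtains_unique_zero[of "{0..r}" "\<lambda>i. card (A \<inter> Fi n i)"] le_one sum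
    by auto
  have "\<forall>i. \<exists>j. i \<le> r \<and> i \<noteq> i1 \<longrightarrow> A \<inter> Fi n i = {F i j}"
  proof (intro allI)
    fix i
    show "\<exists>j. i \<le> r \<and> i \<noteq> i1 \<longrightarrow> A \<inter> Fi n i = {F i j}"
    proof (cases "i \<le> r \<and> i \<noteq> i1")
      case True
      then obtain x where "A \<inter> Fi n i = {x}"
        using others by (meson card_1_singletonE)
      then show ?thesis
        by (auto simp: Fi_def)
    qed blast
  qed
  from choice[OF this] obtain js
    where "\<forall>i. i \<le> r \<and> i \<noteq> i1 \<longrightarrow> A \<inter> Fi n i = {F i (js i)}"
    by blast
  then have js: "\<And>i. i \<le> r \<Longrightarrow> i \<noteq> i1 \<Longrightarrow> A \<inter> Fi n i = {F i (js i)}"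
    by blast
  have empty: "A \<inter> Fi n i1 = {}"
    using i1(2) assms(1) by simp
  have "A - {c0} = (\<Union>i\<in>{0..r} - {i1}. A \<inter> Fi n i)"
    unfolding split using empty by blast
  also have "\<dots> = (\<Union>i\<in>{0..r} - {i1}. {F i (js i)})"
    by (rule SUP_cong) (simp_all add: js)
  also have "\<dots> = (\<lambda>i. F i (js i)) ` ({0..r} - {i1})"
    by blast
  finally have "A - {c0} = (\<lambda>i. F i (js i)) ` ({0..r} - {i1})" .
  with i1(1) empty js show ?thesis
    by (rule that)
qed

theorem lemma4p8:
  fixes r :: nat and n :: "nat \<Rightarrow> nat" and l d :: "nat \<Rightarrow> nat \<Rightarrow> int"
    and Fp A :: "col set" and cs :: "col list"
  assumes "r \<ge> 1"
    and "\<forall>i\<le>r. n i \<ge> 1"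
    and "\<forall>i\<le>r. \<forall>j\<in>{1..n i}. l i j \<ge> 1 \<and> gcd (l i j) (d i j) = 1"
    and "\<forall>i\<le>r. \<forall>j j'. 1 \<le> j \<and> j < j' \<and> j' \<le> n i \<longrightarrow>
           real_of_int (d i j) / real_of_int (l i j) > real_of_int (d i j') / real_of_int (l i j')"
    and "Fp \<subseteq> {Fplus, Fminus}"
    and "A \<subseteq> Fall r n Fp"
    and "card A = r + 1"
    and "distinct cs" and "set cs = A"
    and "det (subP r l d cs) \<noteq> 0"
    and "A \<inter> Fp \<noteq> {}"
  shows "\<exists>i1\<le>r. card (A \<inter> Fi n i1) = 0 \<and> (\<forall>i\<le>r. i \<noteq> i1 \<longrightarrow> card (A \<inter> Fi n i) = 1) \<and>
           (\<exists>js :: nat \<Rightarrow> nat. (\<forall>i\<le>r. i \<noteq> i1 \<longrightarrow> A \<inter> Fi n i = {F i (js i)}) \<and>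
              \<bar>det (subP r l d cs)\<bar> = (\<Prod>i\<in>{0..r} - {i1}. l i (js i)))"
proof -
  have cs: "length cs = Suc r"
    using distinct_card[OF assms(8)] assms(7,9) by simp
  have fin: "finite A"
    unfolding assms(9)[symmetric] by simp
  obtain c0 where c0: "c0 \<in> A" "c0 \<in> {Fplus, Fminus}"
    using assms(5,11) by blast
  note columns = nonsingular_subP_columns[OF assms(8) cs assms(10) c0[folded assms(9)]]
  obtain i1 js where i1: "i1 \<le> r" "A \<inter> Fi n i1 = {}"
    and js: "\<And>i. i \<le> r \<Longrightarrow> i \<noteq> i1 \<Longrightarrow> A \<inter> Fi n i = {F i (js i)}"
    and rest: "A - {c0} = (\<lambda>i. F i (js i)) ` ({0..r} - {i1})"
    by (rule columns_meet_all_groups_but_one[OF fin assms(7,6,5) columns[unfolded assms(9)]]) blast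
  have "l i (js i) \<ge> 0" if "i \<in> {0..r} - {i1}" for i
  proof -
    from that have i: "i \<le> r" "i \<noteq> i1"
      by auto
    then have "F i (js i) \<in> Fi n i"
      using js[OF i] by blast
    then have "js i \<in> {1..n i}"
      by (simp add: Fi_def)
    then have "l i (js i) \<ge> 1"
      using assms(3) i(1) by blast
    then show ?thesis
      by simp
  qed
  then have "\<bar>det (subP r l d cs)\<bar> = (\<Prod>i\<in>{0..r} - {i1}. l i (js i))"
    using abs_det_subP[OF assms(8) cs assms(10) columns] prod_col_weight_eq[OF fin c0 rest]
    unfolding assms(9) by simp
  with i1 js show ?thesis
    by (intro exI[of _ i1] conjI exI[of _ js]) simp_all
qed

end
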